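(* There exist $u_0\in\exp L^2(\mathbb{R}^N)$ and a constant $C>0$ such that $$\|e^{-t\Delta^2}u_0-u_0\|_{\exp L^2}\geq C\quad\text{for all }t>0.$$
   Context: $e^{-t\Delta^2}$ denotes the biharmonic heat semigroup on $\mathbb{R}^N$: $e^{-t\Delta^2}\varphi=E_t\star\varphi$ with $E_t(x)=(2\pi)^{-N}\int_{\mathbb{R}^N}e^{-t|\xi|^4}e^{ix\cdot\xi}\,d\xi$. The Orlicz space $\exp L^2(\mathbb{R}^N)$ is the set of $u\in L^1_{loc}(\mathbb{R}^N)$ such that $\int_{\mathbb{R}^N}(e^{|u(x)|^2/\alpha^2}-1)\,dx<\infty$ for some $\alpha>0$, with the Luxemburg norm $\|u\|_{\exp L^2}=\inf\{\alpha>0:\int_{\mathbb{R}^N}(e^{|u(x)|^2/\alpha^2}-1)\,dx\leq 1\}$. *)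

theory Defs
  imports "HOL-Analysis.Analysis"
begin

definition biharm_kernel :: "real \<Rightarrow> 'a::euclidean_space \<Rightarrow> complex" where
  "biharm_kernel t x =
     complex_of_real ((2 * pi) powr (- real DIM('a))) *
     (LINT xi|lebesgue. complex_of_real (exp (- t * norm xi ^ 4)) * exp (\<i> * complex_of_real (x \<bullet> xi)))"

definition biharm_semigroup :: "real \<Rightarrow> ('a::euclidean_space \<Rightarrow> complex) \<Rightarrow> 'a \<Rightarrow> complex" where
  "biharm_semigroup t \<phi> x = (LINT y|lebesgue. biharm_kernel t (x - y) * \<phi> y)"

definition L1_loc :: "('a::euclidean_space \<Rightarrow> complex) set" where
  "L1_loc = {u. u \<in> borel_measurable lebesgue \<and>
                (\<forall>K. compact K \<longrightarrow> set_integrable lebesgue K u)}"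

definition orlicz_exp2_modular :: "('a::euclidean_space \<Rightarrow> complex) \<Rightarrow> real \<Rightarrow> ennreal" where
  "orlicz_exp2_modular u \<alpha> =
     (\<integral>\<^sup>+ x. ennreal (exp ((cmod (u x))\<^sup>2 / \<alpha>\<^sup>2) - 1) \<partial>lebesgue)"

definition expL2 :: "('a::euclidean_space \<Rightarrow> complex) set" where
  "expL2 = {u. u \<in> L1_loc \<and> (\<exists>\<alpha>>0. orlicz_exp2_modular u \<alpha> < \<infinity>)}"

text \<open>Luxemburg norm, valued in [0, infinity] (infinity when no admissible alpha exists).\<close>
definition expL2_norm :: "('a::euclidean_space \<Rightarrow> complex) \<Rightarrow> ennreal" where
  "expL2_norm u = Inf (ennreal ` {\<alpha>. \<alpha> > 0 \<and> orlicz_exp2_modular u \<alpha> \<le> 1})"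

end

theory Submission
  imports Defs "HOL-Library.Landau_Symbols" "HOL-Real_Asymp.Real_Asymp"
begin

text \<open>
  Take \<open>u\<^sub>0\<close> equal to \<open>\<surd>k\<close> on a shell of volume about \<open>e\<^sup>-\<^sup>k\<close> at the origin, a step version of
  \<open>(log (1/|x|\<^sup>N))\<^sup>1\<^sup>/\<^sup>2\<close>. It is integrable and \<open>\<integral> exp (u\<^sub>0\<^sup>2/4) - 1 < \<infinity>\<close>, so \<open>u\<^sub>0 \<in> exp L\<^sup>2\<close>.
  The kernel \<open>E\<^sub>t\<close> is bounded (its Fourier transform is integrable), so \<open>e\<^sup>-\<^sup>t\<^sup>\<Delta>\<^sup>2 u\<^sub>0\<close> is bounded
  for each \<open>t\<close>. But \<open>u\<^sub>0\<close> is at distance at least \<open>1/4\<close> from every bounded function: if \<open>|g| \<le> B\<close>,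
  then \<open>|g - u\<^sub>0| \<ge> \<surd>k/2\<close> on the \<open>k\<close>-th shell for large \<open>k\<close>, and for \<open>\<alpha> \<le> 1/4\<close> the modular of
  \<open>g - u\<^sub>0\<close> dominates \<open>(e\<^sup>4\<^sup>k - 1) e\<^sup>-\<^sup>k\<close>, which is unbounded.
\<close>

lemma expL2_norm_ge:
  assumes "\<And>\<alpha>. 0 < \<alpha> \<Longrightarrow> \<alpha> < c \<Longrightarrow> 1 < orlicz_exp2_modular u \<alpha>"
  shows "ennreal c \<le> expL2_norm u"
  unfolding expL2_norm_def le_Inf_iff
proof (intro ballI)
  fix z assume "z \<in> ennreal ` {\<alpha>. 0 < \<alpha> \<and> orlicz_exp2_modular u \<alpha> \<le> 1}"
  then obtain \<alpha> where "z = ennreal \<alpha>" "0 < \<alpha>" "orlicz_exp2_modular u \<alpha> \<le> 1"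
    by auto
  with assms have "c \<le> \<alpha>"
    by (meson leD leI)
  with \<open>z = ennreal \<alpha>\<close> show "ennreal c \<le> z"
    by (simp add: ennreal_leI)
qed

lemma ennreal_eq_top_if_dominates_filterlim:
  assumes "filterlim a at_top sequentially" "\<forall>\<^sub>F n in sequentially. ennreal (a n) \<le> M"
  shows "M = \<infinity>"
proof (rule ccontr)
  assume "M \<noteq> \<infinity>"
  then obtain m where "M = ennreal m" "0 \<le> m"
    by (cases M) auto
  with assms(2) have "\<forall>\<^sub>F n in sequentially. a n \<le> m"
    by (auto elim: eventually_mono simp: ennreal_le_iff)
  moreover have "\<forall>\<^sub>F n in sequentially. m < a n"
    using assms(1) by (simp add: filterlim_at_top_dense)
  ultimately have "\<forall>\<^sub>F n in sequentially. False"
    by eventually_elim simp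
  then show False
    by simp
qed

text \<open>No sign condition on \<open>t\<close> is needed: for \<open>t \<le> 0\<close> the defining integral is not integrable,
  so the kernel is \<open>0\<close> by the convention for non-integrable Bochner integrals.\<close>

lemma biharm_kernel_bounded: "\<exists>M. \<forall>z::'a::euclidean_space. cmod (biharm_kernel t z) \<le> M"
proof (intro exI allI)
  fix z :: 'a
  let ?f = "\<lambda>\<xi>::'a. complex_of_real (exp (- t * norm \<xi> ^ 4)) * exp (\<i> * complex_of_real (z \<bullet> \<xi>))"
  have "cmod (LINT \<xi>|lebesgue. ?f \<xi>) \<le> (LINT \<xi>|lebesgue. norm (?f \<xi>))"
    by (rule integral_norm_bound)
  also have "\<dots> = (LINT \<xi>|(lebesgue::'a measure). exp (- t * norm \<xi> ^ 4))"
    by (simp add: norm_mult)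
  finally have "cmod (LINT \<xi>|lebesgue. ?f \<xi>) \<le> (LINT \<xi>|(lebesgue::'a measure). exp (- t * norm \<xi> ^ 4))" .
  then show "cmod (biharm_kernel t z)
      \<le> (2 * pi) powr (- real DIM('a)) * (LINT \<xi>|(lebesgue::'a measure). exp (- t * norm \<xi> ^ 4))"
    unfolding biharm_kernel_def norm_mult norm_of_real abs_of_nonneg[OF powr_ge_zero]
    by (rule mult_left_mono) simp
qed

lemma biharm_semigroup_bounded:
  fixes \<phi> :: "'a::euclidean_space \<Rightarrow> complex"
  assumes "integrable lebesgue \<phi>"
  shows "\<exists>B. \<forall>x. cmod (biharm_semigroup t \<phi> x) \<le> B"
proof -
  obtain M where M: "\<And>z::'a. cmod (biharm_kernel t z) \<le> M"
    using biharm_kernel_bounded by blast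
  have "cmod (biharm_semigroup t \<phi> x) \<le> (LINT y|lebesgue. M * norm (\<phi> y))" for x
  proof (cases "integrable lebesgue (\<lambda>y. biharm_kernel t (x - y) * \<phi> y)")
    case True
    have "cmod (LINT y|lebesgue. biharm_kernel t (x - y) * \<phi> y)
        \<le> (LINT y|lebesgue. norm (biharm_kernel t (x - y) * \<phi> y))"
      by (rule integral_norm_bound)
    also have "\<dots> \<le> (LINT y|lebesgue. M * norm (\<phi> y))"
      using integrable_norm[OF True] assms
      by (intro integral_mono) (auto simp: norm_mult mult_right_mono M)
    finally show ?thesis
      unfolding biharm_semigroup_def .
  next
    case False
    have "0 \<le> M"
      using M[of 0] norm_ge_zero order_trans by blast
    then show ?thesis
      unfolding biharm_semigroup_def not_integrable_integral_eq[OF False] by simp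
  qed
  then show ?thesis
    by blast
qed

definition exp_cube :: "nat \<Rightarrow> 'a::euclidean_space set" where
  "exp_cube k = cbox 0 (exp (- real k / real DIM('a)) *\<^sub>R One)"

definition exp_shell :: "nat \<Rightarrow> 'a::euclidean_space set" where
  "exp_shell k = exp_cube k - exp_cube (Suc k)"

definition shell_volume :: "nat \<Rightarrow> real" where
  "shell_volume k = exp (- real k) - exp (- real (Suc k))"

lemma exp_cube_sets [measurable]: "exp_cube k \<in> sets lebesgue"
  unfolding exp_cube_def by simp

lemma exp_shell_sets [measurable]: "exp_shell k \<in> sets lebesgue"
  unfolding exp_shell_def by simp

lemma emeasure_exp_cube: "emeasure lebesgue (exp_cube k :: 'a::euclidean_space set) = ennreal (exp (- real k))"
proof -
  have "exp (- real k / real DIM('a)) ^ DIM('a) = exp (- real k)"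
    by (simp add: exp_of_nat_mult[symmetric])
  moreover have "emeasure lebesgue (exp_cube k :: 'a set) = emeasure lborel (exp_cube k :: 'a set)"
    unfolding exp_cube_def by simp
  ultimately show ?thesis
    unfolding exp_cube_def by (simp add: emeasure_lborel_cbox_eq prod_constant)
qed

lemma decseq_exp_cube: "decseq (exp_cube :: nat \<Rightarrow> 'a::euclidean_space set)"
proof (rule decseq_SucI)
  fix k
  have "exp (- real (Suc k) / real DIM('a)) \<le> exp (- real k / real DIM('a))"
    by (simp add: field_simps)
  then show "exp_cube (Suc k) \<subseteq> (exp_cube k :: 'a set)"
    unfolding exp_cube_def by (intro subset_box_imp) (simp add: inner_Basis)
qed

lemma exp_cube_antimono: "i \<le> j \<Longrightarrow> exp_cube j \<subseteq> (exp_cube i :: 'a::euclidean_space set)"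
  using decseq_exp_cube by (rule decseqD)

lemma shell_volume_nonneg: "0 \<le> shell_volume k"
  by (simp add: shell_volume_def)

lemma emeasure_exp_shell:
  "emeasure lebesgue (exp_shell k :: 'a::euclidean_space set) = ennreal (shell_volume k)"
  unfolding exp_shell_def shell_volume_def
  using exp_cube_antimono[of k "Suc k", where 'a='a]
  by (subst emeasure_Diff) (auto simp: emeasure_exp_cube ennreal_minus simp del: exp_minus)

lemma exp_shell_disjoint: "x \<in> exp_shell i \<Longrightarrow> x \<in> exp_shell j \<Longrightarrow> i = j"
  unfolding exp_shell_def
  using exp_cube_antimono[of "Suc i" j] exp_cube_antimono[of "Suc j" i]
  by (cases i j rule: linorder_cases) auto

lemma suminf_indicator_exp_shell:
  fixes c :: "nat \<Rightarrow> 'b::{t2_space,topological_comm_monoid_add,mult_zero,monoid_mult,zero_neq_one}"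
  assumes "x \<in> exp_shell k"
  shows "(\<Sum>j. c j * indicator (exp_shell j) x) = c k"
proof -
  have "x \<notin> exp_shell j" if "j \<noteq> k" for j
    using exp_shell_disjoint that assms by blast
  then have "(\<lambda>j. c j * indicator (exp_shell j) x) = (\<lambda>j. if j = k then c k else 0)"
    using assms by auto
  then show ?thesis
    using sums_single[of k "\<lambda>_. c k"] by (simp add: sums_iff)
qed

lemma nn_integral_exp_shell_step:
  "(\<integral>\<^sup>+x. (\<Sum>k. c k * indicator (exp_shell k :: 'a::euclidean_space set) x) \<partial>lebesgue)
     = (\<Sum>k. c k * ennreal (shell_volume k))"
  by (subst nn_integral_suminf) (auto simp: nn_integral_cmult_indicator emeasure_exp_shell)

lemma suminf_shell_volume_weighted_finite:
  assumes "(\<lambda>k. w k * shell_volume k) \<in> O(\<lambda>k. real k powr -2)" "\<And>k. 0 \<le> w k"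
  shows "(\<Sum>k. ennreal (w k) * ennreal (shell_volume k)) < \<infinity>"
proof -
  have "summable (\<lambda>k. w k * shell_volume k)"
    using assms(1) by (rule summable_comparison_test_bigo[rotated]) (simp add: summable_real_powr_iff)
  then have "(\<Sum>k. ennreal (w k * shell_volume k)) \<noteq> top"
    by (rule ennreal_suminf_neq_top) (simp add: assms(2) shell_volume_nonneg)
  then show ?thesis
    using assms(2) by (simp add: ennreal_mult shell_volume_nonneg top.not_eq_extremum)
qed

definition sqrt_log_staircase :: "'a::euclidean_space \<Rightarrow> real" where
  "sqrt_log_staircase x = (\<Sum>k. sqrt (real k) * indicator (exp_shell k) x)"

lemma sqrt_log_staircase_on_shell: "x \<in> exp_shell k \<Longrightarrow> sqrt_log_staircase x = sqrt (real k)"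
  unfolding sqrt_log_staircase_def by (rule suminf_indicator_exp_shell)

lemma sqrt_log_staircase_off_shells: "(\<And>k. x \<notin> exp_shell k) \<Longrightarrow> sqrt_log_staircase x = 0"
  unfolding sqrt_log_staircase_def by simp

lemma sqrt_log_staircase_cases:
  obtains k where "x \<in> exp_shell k" "sqrt_log_staircase x = sqrt (real k)"
  | "\<And>k. x \<notin> exp_shell k" "sqrt_log_staircase x = 0"
  using sqrt_log_staircase_on_shell sqrt_log_staircase_off_shells by blast

lemma sqrt_log_staircase_measurable [measurable]: "sqrt_log_staircase \<in> borel_measurable lebesgue"
  unfolding sqrt_log_staircase_def by measurable

lemma sqrt_log_staircase_nonneg: "0 \<le> sqrt_log_staircase x"
  by (cases x rule: sqrt_log_staircase_cases) auto

lemma nn_integral_function_of_staircase: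
  assumes "f 0 = 0"
  shows "(\<integral>\<^sup>+x. ennreal (f (sqrt_log_staircase x)) \<partial>(lebesgue :: 'a::euclidean_space measure))
           = (\<Sum>k. ennreal (f (sqrt (real k))) * ennreal (shell_volume k))"
proof -
  have "ennreal (f (sqrt_log_staircase x))
          = (\<Sum>k. ennreal (f (sqrt (real k))) * indicator (exp_shell k) x)" for x :: 'a
    by (cases x rule: sqrt_log_staircase_cases) (auto simp: suminf_indicator_exp_shell assms)
  then show ?thesis
    by (simp add: nn_integral_exp_shell_step)
qed

lemma integrable_sqrt_log_staircase: "integrable lebesgue (sqrt_log_staircase :: 'a::euclidean_space \<Rightarrow> real)"
proof -
  have "(\<integral>\<^sup>+x. ennreal \<bar>sqrt_log_staircase x\<bar> \<partial>(lebesgue :: 'a measure))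
      = (\<Sum>k. ennreal (sqrt (real k)) * ennreal (shell_volume k))"
    using nn_integral_function_of_staircase[of abs, where 'a='a] by simp
  also have "\<dots> < \<infinity>"
    by (rule suminf_shell_volume_weighted_finite) (unfold shell_volume_def, real_asymp, simp)
  finally show ?thesis
    by (simp add: integrable_iff_bounded)
qed

lemma sqrt_log_staircase_in_expL2:
  "(\<lambda>x. complex_of_real (sqrt_log_staircase x)) \<in> (expL2 :: ('a::euclidean_space \<Rightarrow> complex) set)"
  unfolding expL2_def L1_loc_def
proof (intro CollectI conjI allI impI exI)
  show "(\<lambda>x. complex_of_real (sqrt_log_staircase x)) \<in> borel_measurable lebesgue"
    by measurable
  fix K :: "'a set" assume "compact K"
  then show "set_integrable lebesgue K (\<lambda>x. complex_of_real (sqrt_log_staircase x))"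
    unfolding set_integrable_def
    by (intro integrable_mult_indicator integrable_of_real integrable_sqrt_log_staircase)
       (simp add: fmeasurableD lmeasurable_compact)
next
  have "orlicz_exp2_modular (\<lambda>x::'a. complex_of_real (sqrt_log_staircase x)) 2
      = (\<integral>\<^sup>+x. ennreal ((\<lambda>s. exp (s\<^sup>2 / 4) - 1) (sqrt_log_staircase x)) \<partial>(lebesgue :: 'a measure))"
    by (simp add: orlicz_exp2_modular_def)
  also have "\<dots> = (\<Sum>k. ennreal (exp (real k / 4) - 1) * ennreal (shell_volume k))"
    by (subst nn_integral_function_of_staircase) simp_all
  also have "\<dots> < \<infinity>"
    by (rule suminf_shell_volume_weighted_finite) (unfold shell_volume_def, real_asymp, simp)
  finally show "orlicz_exp2_modular (\<lambda>x::'a. complex_of_real (sqrt_log_staircase x)) 2 < \<infinity>" .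
qed simp

lemma sqrt_log_staircase_far_from_bounded:
  fixes g :: "'a::euclidean_space \<Rightarrow> complex"
  assumes "\<And>x. cmod (g x) \<le> B" "x \<in> exp_shell k" "4 * B\<^sup>2 \<le> real k"
  shows "sqrt (real k) / 2 \<le> cmod (g x - complex_of_real (sqrt_log_staircase x))"
proof -
  have "sqrt (4 * B\<^sup>2) \<le> sqrt (real k)"
    using assms(3) by (rule real_sqrt_le_mono)
  then have "2 * B \<le> sqrt (real k)"
    by (simp add: real_sqrt_mult)
  moreover have "sqrt_log_staircase x - cmod (g x) \<le> cmod (g x - complex_of_real (sqrt_log_staircase x))"
    using norm_triangle_ineq2[of "complex_of_real (sqrt_log_staircase x)" "g x"]
      sqrt_log_staircase_nonneg[of x]
    by (simp add: norm_minus_commute)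
  ultimately show ?thesis
    using assms(1)[of x] sqrt_log_staircase_on_shell[OF assms(2)] by simp
qed

lemma orlicz_exp2_modular_bounded_minus_staircase:
  fixes g :: "'a::euclidean_space \<Rightarrow> complex"
  assumes bounded: "\<And>x. cmod (g x) \<le> B" and "0 < \<alpha>" "\<alpha> \<le> 1/4"
  shows "orlicz_exp2_modular (\<lambda>x. g x - complex_of_real (sqrt_log_staircase x)) \<alpha> = \<infinity>"
proof -
  let ?h = "\<lambda>x. g x - complex_of_real (sqrt_log_staircase x)"
  have "\<alpha>\<^sup>2 \<le> (1/4)\<^sup>2"
    using assms(2,3) by (intro power_mono) auto
  have shell_bound: "ennreal ((exp (4 * real k) - 1) * shell_volume k) \<le> orlicz_exp2_modular ?h \<alpha>"
    if "4 * B\<^sup>2 \<le> real k" for k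
  proof -
    have pointwise: "exp (4 * real k) - 1 \<le> exp ((cmod (?h x))\<^sup>2 / \<alpha>\<^sup>2) - 1"
      if "x \<in> exp_shell k" for x
    proof -
      have "(sqrt (real k) / 2)\<^sup>2 \<le> (cmod (?h x))\<^sup>2"
        using sqrt_log_staircase_far_from_bounded[OF bounded that \<open>4 * B\<^sup>2 \<le> real k\<close>]
        by (intro power_mono) auto
      then have "real k / 4 \<le> (cmod (?h x))\<^sup>2"
        by (simp add: power_divide)
      have "4 * real k = (real k / 4) / (1/4)\<^sup>2"
        by (simp add: power2_eq_square)
      also have "\<dots> \<le> (real k / 4) / \<alpha>\<^sup>2"
        using \<open>\<alpha>\<^sup>2 \<le> (1/4)\<^sup>2\<close> \<open>0 < \<alpha>\<close> by (intro divide_left_mono) auto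
      also have "\<dots> \<le> (cmod (?h x))\<^sup>2 / \<alpha>\<^sup>2"
        using \<open>real k / 4 \<le> (cmod (?h x))\<^sup>2\<close> by (rule divide_right_mono) simp
      finally show ?thesis
        by simp
    qed
    have "(\<integral>\<^sup>+x. ennreal (exp (4 * real k) - 1) * indicator (exp_shell k) x \<partial>(lebesgue :: 'a measure))
        \<le> orlicz_exp2_modular ?h \<alpha>"
      unfolding orlicz_exp2_modular_def
      by (intro nn_integral_mono) (simp add: pointwise ennreal_leI split: split_indicator)
    then show ?thesis
      by (simp add: nn_integral_cmult_indicator emeasure_exp_shell ennreal_mult shell_volume_nonneg)
  qed
  have "\<forall>\<^sub>F k in sequentially. 4 * B\<^sup>2 \<le> real k"
    by real_asymp
  then have dominated: "\<forall>\<^sub>F k in sequentially.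
      ennreal ((exp (4 * real k) - 1) * shell_volume k) \<le> orlicz_exp2_modular ?h \<alpha>"
    by (rule eventually_mono) (rule shell_bound)
  have "filterlim (\<lambda>k. (exp (4 * real k) - 1) * shell_volume k) at_top sequentially"
    unfolding shell_volume_def by real_asymp
  then show ?thesis
    using dominated by (rule ennreal_eq_top_if_dominates_filterlim)
qed

theorem proposition3p8:
  "\<exists>(u0 :: 'a::euclidean_space \<Rightarrow> real) (C::real).
      (\<lambda>x. complex_of_real (u0 x)) \<in> expL2 \<and> C > 0 \<and>
      (\<forall>t>0. expL2_norm (\<lambda>x. biharm_semigroup t (\<lambda>y. complex_of_real (u0 y)) x
                               - complex_of_real (u0 x)) \<ge> ennreal C)"
proof (intro exI conjI allI impI)
  show "(\<lambda>x. complex_of_real (sqrt_log_staircase x)) \<in> (expL2 :: ('a \<Rightarrow> complex) set)"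
    by (rule sqrt_log_staircase_in_expL2)
  fix t :: real
  obtain B where B: "\<And>x::'a. cmod (biharm_semigroup t (\<lambda>y. complex_of_real (sqrt_log_staircase y)) x) \<le> B"
    using biharm_semigroup_bounded integrable_of_real[OF integrable_sqrt_log_staircase] by blast
  show "ennreal (1/4) \<le> expL2_norm (\<lambda>x::'a.
      biharm_semigroup t (\<lambda>y. complex_of_real (sqrt_log_staircase y)) x - complex_of_real (sqrt_log_staircase x))"
    by (intro expL2_norm_ge) (simp add: orlicz_exp2_modular_bounded_minus_staircase[OF B])
qed simp

end
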